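(* Let $q$ be a prime power and $d\ge 3$. Let $\mathbb{F}_q[x,y]_d$ be the vector space of binary forms of degree $d$ over $\mathbb{F}_q$ (including $0$), and let \[ B_d=\{f\in\mathbb{F}_q[x,y]_d : f \text{ has a double root in } \mathbb{P}^1(\overline{\mathbb{F}}_q)\}, \] where by convention $0\in B_d$. Then $\#B_d=q^d+q^{d-1}-q^{d-2}$.
   Context: A binary form $f$ has a double root at a point of $\mathbb{P}^1(\overline{\mathbb{F}}_q)$ if the corresponding linear form divides $f$ at least twice over $\overline{\mathbb{F}}_q$; i.e. $B_d$ is the set of binary forms of degree $d$ which are not square-free, with $0$ regarded as not square-free. *)

theory Defs
  imports "HOL-Library.Cardinality" "HOL-Computational_Algebra.Polynomial" "HOL-Algebra.Algebraic_Closure_Type"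
begin

(* A binary form of degree d over a field K, f = \<Sum>_{i\<le>d} c_i x^i y^(d-i),
   is encoded by the univariate polynomial \<Sum>_{i\<le>d} c_i X^i of degree \<le> d
   (the form 0 is the zero polynomial).  Under this encoding the product of a form
   of degree m with a form of degree n is the polynomial product (degree m+n). *)
definition binary_forms :: "nat \<Rightarrow> 'a::zero poly set" where
  "binary_forms d = {f. degree f \<le> d}"

(* The linear form b x - a y over the algebraic closure (with (a,b) \<noteq> (0,0)),
   i.e. the point [a:b] of P^1, is encoded by [:-a, b:].  A degree-d form f has a double
   root in P^1(algebraic closure) iff for some such linear form l, l^2 divides f in
   the ring of binary forms over the algebraic closure, i.e. f = l^2 * g for a
   form g of degree d-2. *)
definition has_double_root :: "nat \<Rightarrow> 'a::field poly \<Rightarrow> bool" where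
  "has_double_root d f \<longleftrightarrow>
     (\<exists>a b :: 'a alg_closure. (a, b) \<noteq> (0, 0) \<and>
        (\<exists>g. degree g \<le> d - 2 \<and> map_poly to_ac f = [:-a, b:]^2 * g))"

definition B :: "nat \<Rightarrow> 'a::field poly set" where
  "B d = {f \<in> binary_forms d. has_double_root d f}"

end

(* A form f of degree at most d has a double root in P^1 either at infinity, which happens
   exactly when deg f <= d - 2, or at a finite point, which over the perfect field F_q happens
   exactly when f is not squarefree: a repeated root of an irreducible factor would make that
   factor divide its own derivative.  Writing every monic polynomial uniquely as a^2 b with b
   squarefree gives q^n = sum_k q^k S(n - 2k), where S(m) counts the squarefree monic
   polynomials of degree m; comparing degrees n and n - 2 yields S(n) = q^n - q^(n-1) for
   n >= 2.  Hence there are (q - 1) q^(n-1) non-squarefree polynomials of degree n >= 2, and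
   #B_d = q^(d-1) + (q - 1) q^(d-2) + (q - 1) q^(d-1) = q^d + q^(d-1) - q^(d-2). *)
theory Submission
  imports Defs "HOL-Computational_Algebra.Squarefree"
begin

abbreviation to_ac_poly :: "'a::field poly \<Rightarrow> 'a alg_closure poly" where
  "to_ac_poly \<equiv> map_poly to_ac"

lemma coeff_to_ac_poly: "coeff (to_ac_poly p) n = to_ac (coeff p n)"
  by (simp add: coeff_map_poly)

lemma degree_to_ac_poly [simp]: "degree (to_ac_poly p) = degree p"
  by (simp add: degree_map_poly)

lemma to_ac_poly_eq_0_iff [simp]: "to_ac_poly p = 0 \<longleftrightarrow> p = 0"
  by (simp add: map_poly_eq_0_iff)

lemma to_ac_poly_add: "to_ac_poly (p + q) = to_ac_poly p + to_ac_poly q"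
  by (rule poly_eqI) (simp add: coeff_to_ac_poly)

lemma to_ac_poly_mult: "to_ac_poly (p * q) = to_ac_poly p * to_ac_poly q"
  by (rule poly_eqI) (simp add: coeff_to_ac_poly coeff_mult to_ac_sum)

lemma to_ac_poly_power: "to_ac_poly (p ^ n) = to_ac_poly p ^ n"
  by (induction n) (simp_all add: to_ac_poly_mult)

lemma to_ac_poly_pderiv: "to_ac_poly (pderiv p) = pderiv (to_ac_poly p)"
  by (rule poly_eqI) (simp add: coeff_to_ac_poly coeff_pderiv)

section \<open>Polynomials with vanishing derivative over a finite field\<close>

lemma prime_CHAR_finite_field: "prime CHAR('a::{finite,field})"
  by (rule prime_CHAR_semidom) (simp add: finite_imp_CHAR_pos)

lemma surj_Frobenius: "surj (\<lambda>x::'a::{finite,field}. x ^ CHAR('a))"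
proof -
  have "inj (\<lambda>x::'a. x ^ CHAR('a))"
  proof (rule injI)
    fix x y :: 'a
    assume "x ^ CHAR('a) = y ^ CHAR('a)"
    moreover have "((x - y) + y) ^ CHAR('a) = (x - y) ^ CHAR('a) + y ^ CHAR('a)"
      by (rule freshmans_dream[OF prime_CHAR_finite_field refl])
    ultimately have "(x - y) ^ CHAR('a) = 0" by simp
    then show "x = y" by simp
  qed
  then show ?thesis by (simp add: finite_UNIV_inj_surj)
qed

lemma pderiv_eq_0_imp_coeff_eq_0:
  fixes p :: "'a::idom poly"
  assumes "pderiv p = 0" "\<not> CHAR('a) dvd i"
  shows "coeff p i = 0"
proof -
  obtain j where j: "i = Suc j"
    by (cases i) (use assms(2) in auto)
  have "of_nat i * coeff p i = 0"
    using arg_cong[OF assms(1), of "\<lambda>q. coeff q j"] by (simp add: coeff_pderiv j)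
  moreover have "of_nat i \<noteq> (0::'a)"
    using assms(2) by (simp add: of_nat_eq_0_iff_char_dvd)
  ultimately show ?thesis by simp
qed

lemma poly_eq_sum_monom_multiples:
  assumes "c > 0" and coeff_nondvd: "\<And>i. \<not> c dvd i \<Longrightarrow> coeff p i = 0"
  shows "p = (\<Sum>j\<le>degree p. monom (coeff p (c * j)) (c * j))"
proof (rule poly_eqI)
  fix i
  have "coeff (\<Sum>j\<le>degree p. monom (coeff p (c * j)) (c * j)) i
          = (\<Sum>j\<le>degree p. if c * j = i then coeff p i else 0)"
    by (auto simp: coeff_sum coeff_monom intro: sum.cong)
  also have "\<dots> = coeff p i"
  proof (cases "c dvd i")
    case True
    then obtain k where k: "i = c * k" by auto
    have "c * j = i \<longleftrightarrow> j = k" for j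
      using \<open>c > 0\<close> k by simp
    moreover have "coeff p i = 0" if "\<not> k \<le> degree p"
    proof (rule coeff_eq_0)
      have "k \<le> c * k" using \<open>c > 0\<close> by simp
      with that k show "degree p < i" by linarith
    qed
    ultimately show ?thesis by (simp add: sum.delta)
  next
    case False
    then have "c * j \<noteq> i" for j by auto
    with False show ?thesis by (simp add: coeff_nondvd)
  qed
  finally show "coeff p i = coeff (\<Sum>j\<le>degree p. monom (coeff p (c * j)) (c * j)) i"
    by (rule sym)
qed

lemma pderiv_eq_0_imp_CHAR_power:
  fixes p :: "'a::{finite,field} poly"
  assumes "pderiv p = 0"
  obtains h where "p = h ^ CHAR('a)"
proof -
  define c where "c = CHAR('a)"
  have "prime c" unfolding c_def by (rule prime_CHAR_finite_field)
  obtain root :: "'a \<Rightarrow> 'a" where root: "\<And>y. root y ^ c = y"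
    using surj_Frobenius[where 'a='a] unfolding c_def by (metis surj_f_inv_f)
  \<comment> \<open>p only has terms X^(c j), and Frobenius is additive: take c-th roots termwise.\<close>
  define h where "h = (\<Sum>j\<le>degree p. monom (root (coeff p (c * j))) j)"
  have "h ^ c = (\<Sum>j\<le>degree p. monom (root (coeff p (c * j))) j ^ c)"
    unfolding h_def using \<open>prime c\<close> by (intro freshmans_dream_sum) (simp_all add: c_def)
  also have "\<dots> = (\<Sum>j\<le>degree p. monom (coeff p (c * j)) (c * j))"
    by (simp add: monom_power root mult.commute)
  also have "\<dots> = p"
  proof (rule poly_eq_sum_monom_multiples[symmetric])
    show "c > 0"
      using \<open>prime c\<close> by (simp add: prime_gt_0_nat)
    show "coeff p i = 0" if "\<not> c dvd i" for i
      using assms that unfolding c_def by (rule pderiv_eq_0_imp_coeff_eq_0)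
  qed
  finally have "p = h ^ c" by (rule sym)
  then show ?thesis
    unfolding c_def by (rule that)
qed

section \<open>Minimal polynomials and double roots\<close>

definition is_min_poly :: "'a alg_closure \<Rightarrow> 'a::field poly \<Rightarrow> bool" where
  "is_min_poly \<alpha> m \<longleftrightarrow> m \<noteq> 0 \<and> poly (to_ac_poly m) \<alpha> = 0 \<and>
     (\<forall>p. p \<noteq> 0 \<and> poly (to_ac_poly p) \<alpha> = 0 \<longrightarrow> degree m \<le> degree p)"

lemma min_poly_exists:
  assumes "p \<noteq> 0" "poly (to_ac_poly p) \<alpha> = 0"
  obtains m where "is_min_poly \<alpha> m" "lead_coeff m = 1"
proof -
  define P where "P = (\<lambda>p. p \<noteq> 0 \<and> poly (to_ac_poly p) \<alpha> = 0)"
  obtain m where m: "P m" and least: "\<And>p. P p \<Longrightarrow> degree m \<le> degree p"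
    using ex_has_least_nat[of P p degree] assms unfolding P_def by blast
  define m' where "m' = smult (inverse (lead_coeff m)) m"
  have "to_ac_poly m' = smult (to_ac (inverse (lead_coeff m))) (to_ac_poly m)"
    by (rule poly_eqI) (simp add: m'_def coeff_to_ac_poly)
  with m have "P m'" by (simp add: P_def m'_def)
  moreover have "degree m' = degree m" "lead_coeff m' = 1"
    using m by (simp_all add: P_def m'_def)
  ultimately have "is_min_poly \<alpha> m'"
    using least unfolding is_min_poly_def P_def by simp
  then show ?thesis using \<open>lead_coeff m' = 1\<close> by (rule that)
qed

lemma min_poly_dvd_iff:
  assumes "is_min_poly \<alpha> m"
  shows "m dvd p \<longleftrightarrow> poly (to_ac_poly p) \<alpha> = 0"
proof
  assume root: "poly (to_ac_poly p) \<alpha> = 0"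
  have "to_ac_poly p = to_ac_poly m * to_ac_poly (p div m) + to_ac_poly (p mod m)"
    by (simp flip: to_ac_poly_mult to_ac_poly_add)
  with root assms have "poly (to_ac_poly (p mod m)) \<alpha> = 0"
    by (simp add: is_min_poly_def)
  moreover have "degree (p mod m) < degree m" if "p mod m \<noteq> 0"
    using that assms by (intro degree_mod_less') (simp_all add: is_min_poly_def)
  ultimately have "p mod m = 0"
    using assms by (force simp: is_min_poly_def)
  then show "m dvd p" by (simp add: mod_eq_0_iff_dvd)
next
  assume "m dvd p"
  then show "poly (to_ac_poly p) \<alpha> = 0"
    using assms by (auto simp: to_ac_poly_mult is_min_poly_def)
qed

lemma min_poly_prime_elem:
  assumes "is_min_poly \<alpha> m"
  shows "prime_elem m"
proof (rule prime_elemI)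
  show "m \<noteq> 0" using assms by (simp add: is_min_poly_def)
  show "\<not> m dvd 1" using min_poly_dvd_iff[OF assms, of 1] by simp
  show "m dvd p \<or> m dvd q" if "m dvd p * q" for p q
    using that by (simp add: min_poly_dvd_iff[OF assms] to_ac_poly_mult)
qed

lemma degree_pderiv_less:
  assumes "degree p > 0"
  shows "degree (pderiv p) < degree p"
proof -
  have "degree (pderiv p) \<le> degree p - 1"
    by (rule degree_le) (simp add: coeff_pderiv coeff_eq_0)
  with assms show ?thesis by linarith
qed

\<comment> \<open>Finite fields are perfect: an irreducible polynomial is not a CHAR-th power,
  so its derivative is nonzero and of smaller degree.\<close>
lemma min_poly_not_dvd_pderiv:
  fixes m :: "'a::{finite,field} poly"
  assumes "is_min_poly \<alpha> m"
  shows "\<not> m dvd pderiv m"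
proof
  assume dvd: "m dvd pderiv m"
  have "prime_elem m" using assms by (rule min_poly_prime_elem)
  have "pderiv m \<noteq> 0"
  proof
    assume "pderiv m = 0"
    then obtain h where "m = h ^ CHAR('a)"
      by (rule pderiv_eq_0_imp_CHAR_power)
    moreover have "CHAR('a) \<noteq> 1"
      using prime_CHAR_finite_field[where 'a='a] by auto
    moreover have "irreducible m"
      using \<open>prime_elem m\<close> by (rule prime_elem_imp_irreducible)
    ultimately show False by simp
  qed
  with dvd have "degree m \<le> degree (pderiv m)"
    by (rule dvd_imp_degree_le)
  moreover have "degree m > 0"
    using \<open>prime_elem m\<close> by (auto simp: prime_elem_def is_unit_iff_degree)
  ultimately show False
    using degree_pderiv_less[of m] by simp
qed

lemma double_root_imp_pderiv_root:
  fixes p :: "'a::idom poly"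
  assumes "[:-a, 1:] ^ 2 dvd p"
  shows "poly (pderiv p) a = 0"
proof -
  define L where "L = [:-a, 1:]"
  from assms obtain k where "p = L ^ 2 * k"
    unfolding L_def by (rule dvdE)
  then have "pderiv p = L * pderiv (L * k) + (L * k) * pderiv L"
    by (simp only: power2_eq_square mult.assoc pderiv_mult)
  moreover have "poly L a = 0" by (simp add: L_def)
  ultimately show ?thesis by simp
qed

lemma double_root_imp_not_squarefree:
  fixes f :: "'a::{finite,field} poly"
  assumes "[:-\<alpha>, 1:] ^ 2 dvd to_ac_poly f"
  shows "\<not> squarefree f"
proof
  assume sf: "squarefree f"
  then have "f \<noteq> 0" by auto
  have "poly (to_ac_poly f) \<alpha> = 0"
    using assms by (metis dvd_power dvd_trans poly_eq_0_iff_dvd zero_less_numeral)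
  then obtain m where m: "is_min_poly \<alpha> m"
    using min_poly_exists \<open>f \<noteq> 0\<close> by blast
  then obtain s where s: "f = m * s"
    using \<open>poly (to_ac_poly f) \<alpha> = 0\<close> min_poly_dvd_iff by blast
  have "\<not> m dvd s"
  proof
    assume "m dvd s"
    then have "m ^ 2 dvd f" by (simp add: s power2_eq_square)
    with sf have "m dvd 1" by (rule squarefreeD)
    with min_poly_prime_elem[OF m] show False by (simp add: prime_elem_not_unit)
  qed
  \<comment> \<open>Hence \<alpha> is not a root of s, so it is a double root of m.\<close>
  then have "order \<alpha> (to_ac_poly s) = 0"
    by (intro order_0I) (simp add: min_poly_dvd_iff[OF m])
  moreover have "2 \<le> order \<alpha> (to_ac_poly f)"
    using assms \<open>f \<noteq> 0\<close> by (simp add: order_divides)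
  ultimately have "2 \<le> order \<alpha> (to_ac_poly m)"
    using \<open>f \<noteq> 0\<close> by (simp add: s to_ac_poly_mult order_mult)
  then have "poly (to_ac_poly (pderiv m)) \<alpha> = 0"
    using m by (simp add: to_ac_poly_pderiv double_root_imp_pderiv_root order_divides is_min_poly_def)
  then show False
    using min_poly_not_dvd_pderiv[OF m] by (simp add: min_poly_dvd_iff[OF m])
qed

lemma not_squarefree_imp_double_root:
  fixes f :: "'a::field poly"
  assumes "\<not> squarefree f"
  obtains \<alpha> where "[:-\<alpha>, 1:] ^ 2 dvd to_ac_poly f"
proof -
  from assms obtain c where c: "c ^ 2 dvd f" "\<not> c dvd 1"
    by (rule not_squarefreeE)
  show ?thesis
  proof (cases "c = 0")
    case True
    with c have "f = 0" by simp
    then show ?thesis by (intro that[of 0]) simp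
  next
    case False
    with c have "degree (to_ac_poly c) > 0"
      by (simp add: is_unit_iff_degree)
    then obtain \<alpha> where "poly (to_ac_poly c) \<alpha> = 0"
      using alg_closed_imp_poly_has_root by blast
    then have "[:-\<alpha>, 1:] ^ 2 dvd to_ac_poly c ^ 2"
      by (simp add: poly_eq_0_iff_dvd dvd_power_same)
    also have "\<dots> dvd to_ac_poly f"
      using c(1) by (auto simp: to_ac_poly_power to_ac_poly_mult elim!: dvdE)
    finally show ?thesis by (rule that)
  qed
qed

\<comment> \<open>The point [a:b] with b = 0 is the point at infinity; it is a double root of the
  degree-d form exactly when the polynomial has degree at most d - 2.\<close>
lemma has_double_rootD:
  fixes f :: "'a::{finite,field} poly"
  assumes "has_double_root d f"
  shows "degree f \<le> d - 2 \<or> \<not> squarefree f"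
proof -
  from assms obtain a b g where ab: "(a, b) \<noteq> (0, 0)" and "degree g \<le> d - 2"
    and f: "to_ac_poly f = [:-a, b:] ^ 2 * g"
    unfolding has_double_root_def by blast
  show ?thesis
  proof (cases "b = 0")
    case True
    with ab f have "to_ac_poly f = smult (a ^ 2) g" "a \<noteq> 0"
      by (simp_all add: power2_eq_square)
    with \<open>degree g \<le> d - 2\<close> show ?thesis
      by (metis degree_smult_eq degree_to_ac_poly power_eq_0_iff)
  next
    case False
    then have "[:-a, b:] = smult b [:-(a / b), 1:]" by simp
    with f have "to_ac_poly f = smult (b ^ 2) ([:-(a / b), 1:] ^ 2 * g)"
      by (simp only: smult_power mult_smult_left)
    then have "[:-(a / b), 1:] ^ 2 dvd to_ac_poly f"
      by (metis dvd_smult dvd_triv_left)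
    then show ?thesis using double_root_imp_not_squarefree by blast
  qed
qed

lemma has_double_rootI:
  fixes f :: "'a::field poly"
  assumes "degree f \<le> d" "degree f \<le> d - 2 \<or> \<not> squarefree f"
  shows "has_double_root d f"
  using assms(2)
proof
  assume "degree f \<le> d - 2"
  moreover have "to_ac_poly f = [:-(-1), 0:] ^ 2 * to_ac_poly f"
    by (simp flip: one_pCons)
  moreover have "(-1, 0) \<noteq> (0 :: 'a alg_closure, 0 :: 'a alg_closure)" by simp
  ultimately show ?thesis
    unfolding has_double_root_def by (metis degree_to_ac_poly)
next
  assume "\<not> squarefree f"
  then obtain \<alpha> k where k: "to_ac_poly f = [:-\<alpha>, 1:] ^ 2 * k"
    by (metis not_squarefree_imp_double_root dvdE)
  have "degree k \<le> d - 2"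
  proof (cases "k = 0")
    case False
    then have "degree (to_ac_poly f) = 2 + degree k"
      by (simp add: k degree_mult_eq degree_power_eq)
    with assms(1) show ?thesis by simp
  qed simp
  moreover have "(\<alpha>, 1) \<noteq> (0, 0 :: 'a alg_closure)" by simp
  ultimately show ?thesis
    using k unfolding has_double_root_def by blast
qed

section \<open>Counting polynomials over finite fields\<close>

definition monic_polys :: "nat \<Rightarrow> 'a::zero_neq_one poly set" where
  "monic_polys n = {p. degree p = n \<and> lead_coeff p = 1}"

lemma monic_degree_0_eq_1: "degree p = 0 \<Longrightarrow> lead_coeff p = 1 \<Longrightarrow> p = 1"
  by (elim degree_eq_zeroE) (simp add: one_pCons)

lemma monic_polys_0: "monic_polys 0 = {1}"
  by (auto simp: monic_polys_def monic_degree_0_eq_1)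

lemma monic_polys_Suc:
  "monic_polys (Suc n) = (\<lambda>(a, p). pCons a p) ` (UNIV \<times> monic_polys n)"
proof safe
  fix f :: "'a poly"
  assume "f \<in> monic_polys (Suc n)"
  moreover obtain a p where "f = pCons a p" by (rule pCons_cases)
  ultimately have "p \<in> monic_polys n" "f = pCons a p"
    by (auto simp: monic_polys_def split: if_splits)
  then show "f \<in> (\<lambda>(a, p). pCons a p) ` (UNIV \<times> monic_polys n)" by auto
qed (auto simp: monic_polys_def)

lemma degree_eq_0_set: "{p. degree p = 0} = range (\<lambda>a. [:a:])"
  by (auto elim: degree_eq_zeroE)

lemma degree_le_Suc_set:
  "{p. degree p \<le> Suc n} = (\<lambda>(a, p). pCons a p) ` (UNIV \<times> {p. degree p \<le> n})"
proof safe
  fix f :: "'a poly"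
  assume "degree f \<le> Suc n"
  moreover obtain a p where "f = pCons a p" by (rule pCons_cases)
  ultimately have "degree p \<le> n" "f = pCons a p"
    by (auto split: if_splits)
  then show "f \<in> (\<lambda>(a, p). pCons a p) ` (UNIV \<times> {p. degree p \<le> n})" by auto
qed (auto intro: order.trans[OF degree_pCons_le])

lemma inj_on_pCons: "inj_on (\<lambda>(a, p). pCons a p) A"
  by (auto simp: inj_on_def)

lemma card_pCons_image:
  fixes A :: "'a::zero poly set"
  shows "card ((\<lambda>(a, p). pCons a p) ` (UNIV \<times> A)) = CARD('a) * card A"
  by (simp add: card_image[OF inj_on_pCons] card_cartesian_product)

lemma finite_monic_polys: "finite (monic_polys n :: 'a::{finite,comm_semiring_1} poly set)"
  by (induction n) (simp_all add: monic_polys_0 monic_polys_Suc)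

lemma card_monic_polys: "card (monic_polys n :: 'a::{finite,comm_semiring_1} poly set) = CARD('a) ^ n"
  by (induction n) (simp_all add: monic_polys_0 monic_polys_Suc card_pCons_image)

lemma finite_degree_le: "finite {p :: 'a::{finite,zero} poly. degree p \<le> n}"
  by (induction n) (simp_all add: degree_eq_0_set degree_le_Suc_set)

lemma card_degree_le: "card {p :: 'a::{finite,zero} poly. degree p \<le> n} = CARD('a) ^ Suc n"
  by (induction n) (simp_all add: degree_eq_0_set degree_le_Suc_set card_pCons_image card_image inj_on_def)

lemma square_mult_squarefree_unique:
  fixes a :: "'a::field poly"
  assumes "lead_coeff a = 1" "lead_coeff a' = 1" "squarefree b" "squarefree b'"
    and "a ^ 2 * b = a' ^ 2 * b'"
  shows "a = a'"
  using assms
proof (induction "degree a" arbitrary: a a' b b' rule: less_induct)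
  case less
  show ?case
  proof (cases "degree a = 0")
    case True
    with less.prems have "a = 1" by (simp add: monic_degree_0_eq_1)
    with less.prems have "a' ^ 2 dvd b" by simp
    with \<open>squarefree b\<close> have "a' dvd 1" by (rule squarefreeD)
    moreover have "a' \<noteq> 0" using less.prems(2) by auto
    ultimately have "degree a' = 0" by (simp add: is_unit_iff_degree)
    with less.prems \<open>a = 1\<close> show ?thesis
      by (simp add: monic_degree_0_eq_1)
  next
    case False
    then obtain \<alpha> where "poly (to_ac_poly a) \<alpha> = 0"
      using alg_closed_imp_poly_has_root[of "to_ac_poly a"] by auto
    have "a \<noteq> 0" using less.prems by auto
    then obtain m where m: "is_min_poly \<alpha> m" "lead_coeff m = 1"
      using \<open>poly (to_ac_poly a) \<alpha> = 0\<close> by (rule min_poly_exists)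
    have prime: "prime_elem m" using m(1) by (rule min_poly_prime_elem)
    obtain a1 where a1: "a = m * a1"
      using m(1) \<open>poly (to_ac_poly a) \<alpha> = 0\<close> by (auto simp flip: min_poly_dvd_iff)
    show ?thesis
    proof (cases "m dvd a'")
      case True
      then obtain a2 where a2: "a' = m * a2" ..
      have "m ^ 2 * (a1 ^ 2 * b) = m ^ 2 * (a2 ^ 2 * b')"
        using less.prems(5) by (simp add: a1 a2 power_mult_distrib mult.assoc)
      then have "a1 ^ 2 * b = a2 ^ 2 * b'"
        using prime by (simp add: prime_elem_def)
      moreover have "lead_coeff a1 = 1" "lead_coeff a2 = 1"
        using less.prems(1,2) m(2) by (simp_all add: a1 a2 lead_coeff_mult)
      moreover have "degree a1 < degree a"
        using prime \<open>a \<noteq> 0\<close> by (auto simp: a1 degree_mult_eq prime_elem_def is_unit_iff_degree)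
      ultimately have "a1 = a2"
        using less.hyps less.prems(3,4) by blast
      then show ?thesis by (simp add: a1 a2)
    next
      case False
      with prime have not_dvd: "\<not> m dvd a' ^ 2"
        using prime_elem_dvd_power by blast
      have "m ^ 2 dvd a' ^ 2 * b'"
        by (simp flip: less.prems(5) add: a1 power_mult_distrib)
      from prime_power_dvd_multD[OF prime this _ not_dvd] have "m ^ 2 dvd b'"
        by simp
      with \<open>squarefree b'\<close> have "m dvd 1"
        by (rule squarefreeD)
      with prime show ?thesis
        by (simp add: prime_elem_not_unit)
    qed
  qed
qed

lemma square_mult_squarefree_exists:
  fixes f :: "'a::field poly"
  assumes "lead_coeff f = 1"
  obtains a b where "lead_coeff a = 1" "lead_coeff b = 1" "squarefree b" "f = a ^ 2 * b"
  using assms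
proof (induction "degree f" arbitrary: f thesis rule: less_induct)
  case less
  show ?case
  proof (cases "squarefree f")
    case True
    with less.prems show ?thesis by (intro less.prems(1)[of 1 f]) simp_all
  next
    case False
    then obtain c where c: "c ^ 2 dvd f" "\<not> c dvd 1"
      by (rule not_squarefreeE)
    have "f \<noteq> 0" using less.prems by auto
    with c have "c \<noteq> 0" by auto
    define c' where "c' = smult (inverse (lead_coeff c)) c"
    have "lead_coeff c' = 1" "degree c' = degree c" "c' \<noteq> 0"
      using \<open>c \<noteq> 0\<close> by (simp_all add: c'_def)
    have "c' ^ 2 dvd f"
      using c(1) \<open>c \<noteq> 0\<close> by (simp add: c'_def smult_power smult_dvd_iff)
    then obtain g where g: "f = c' ^ 2 * g" ..
    with \<open>f \<noteq> 0\<close> have "g \<noteq> 0" by auto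
    have "lead_coeff g = 1"
      using less.prems(2) \<open>lead_coeff c' = 1\<close> by (simp add: g lead_coeff_mult lead_coeff_power)
    moreover have "degree g < degree f"
      using c \<open>c \<noteq> 0\<close> \<open>c' \<noteq> 0\<close> \<open>g \<noteq> 0\<close> \<open>degree c' = degree c\<close>
      by (auto simp: g degree_mult_eq degree_power_eq is_unit_iff_degree)
    ultimately obtain a b where "lead_coeff a = 1" "lead_coeff b = 1" "squarefree b" "g = a ^ 2 * b"
      using less.hyps by blast
    then show ?thesis
      using \<open>lead_coeff c' = 1\<close>
      by (intro less.prems(1)[of "c' * a" b]) (simp_all add: g lead_coeff_mult power_mult_distrib)
  qed
qed

lemma square_mult_monic:
  fixes a b :: "'a::idom poly"
  assumes "lead_coeff a = 1" "lead_coeff b = 1"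
  shows "degree (a ^ 2 * b) = 2 * degree a + degree b" "lead_coeff (a ^ 2 * b) = 1"
proof -
  from assms have "a \<noteq> 0" "b \<noteq> 0" by auto
  then show "degree (a ^ 2 * b) = 2 * degree a + degree b"
    by (simp add: degree_mult_eq degree_power_eq)
  show "lead_coeff (a ^ 2 * b) = 1"
    using assms by (simp add: lead_coeff_mult lead_coeff_power)
qed

lemma bij_betw_square_mult_squarefree:
  "bij_betw (\<lambda>(k, a, b). a ^ 2 * b)
     (SIGMA k:{..n div 2}. monic_polys k \<times> {b \<in> monic_polys (n - 2 * k). squarefree b})
     (monic_polys n :: 'a::field poly set)"
  (is "bij_betw _ ?D _")
proof (rule bij_betw_imageI)
  show "inj_on (\<lambda>(k, a, b). a ^ 2 * b) ?D"
  proof (rule inj_onI)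
    fix x y
    assume "x \<in> ?D" "y \<in> ?D" "(\<lambda>(k, a, b). a ^ 2 * b) x = (\<lambda>(k, a, b). a ^ 2 * b) y"
    moreover obtain k a b k' a' b' where xy: "x = (k, a, b)" "y = (k', a', b')"
      by (cases x, cases y) auto
    ultimately have "a ^ 2 * b = a' ^ 2 * b'" "lead_coeff a = 1" "lead_coeff a' = 1"
      "squarefree b" "squarefree b'" "k = degree a" "k' = degree a'"
      by (auto simp: monic_polys_def)
    moreover from this have "a = a'"
      by (intro square_mult_squarefree_unique[of a a' b b'])
    ultimately show "x = y"
      using xy by auto
  qed
  show "(\<lambda>(k, a, b). a ^ 2 * b) ` ?D = monic_polys n"
  proof (intro equalityI subsetI)
    fix f
    assume "f \<in> (\<lambda>(k, a, b). a ^ 2 * b) ` ?D"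
    then obtain k a b where "(k, a, b) \<in> ?D" and f: "f = a ^ 2 * b"
      by auto
    then have "lead_coeff a = 1" "lead_coeff b = 1" "2 * degree a + degree b = n"
      by (auto simp: monic_polys_def)
    then show "f \<in> monic_polys n"
      using square_mult_monic[of a b] by (simp add: monic_polys_def f)
  next
    fix f :: "'a poly"
    assume "f \<in> monic_polys n"
    then obtain a b where ab: "lead_coeff a = 1" "lead_coeff b = 1" "squarefree b" "f = a ^ 2 * b"
      using square_mult_squarefree_exists unfolding monic_polys_def by blast
    with \<open>f \<in> monic_polys n\<close> have "n = 2 * degree a + degree b"
      by (simp add: monic_polys_def square_mult_monic)
    with ab have "(degree a, a, b) \<in> ?D"
      by (auto simp: monic_polys_def)
    with ab show "f \<in> (\<lambda>(k, a, b). a ^ 2 * b) ` ?D"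
      by force
  qed
qed

lemma card_monic_polys_square_decomposition:
  "CARD('a::{finite,field}) ^ n =
     (\<Sum>k\<le>n div 2. CARD('a) ^ k * card {b \<in> monic_polys (n - 2 * k) :: 'a poly set. squarefree b})"
proof -
  let ?S = "\<lambda>m. {b \<in> monic_polys m :: 'a poly set. squarefree b}"
  have "card (monic_polys n :: 'a poly set) =
          card (SIGMA k:{..n div 2}. (monic_polys k :: 'a poly set) \<times> ?S (n - 2 * k))"
    by (rule bij_betw_same_card[OF bij_betw_square_mult_squarefree, symmetric])
  also have "\<dots> = (\<Sum>k\<le>n div 2. card ((monic_polys k :: 'a poly set) \<times> ?S (n - 2 * k)))"
    by (rule card_SigmaI) (simp_all add: finite_monic_polys)
  also have "\<dots> = (\<Sum>k\<le>n div 2. CARD('a) ^ k * card (?S (n - 2 * k)))"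
    by (simp add: card_cartesian_product card_monic_polys)
  finally show ?thesis
    by (simp add: card_monic_polys)
qed

\<comment> \<open>Comparing the decompositions in degrees n and n - 2 isolates the squarefree term.\<close>
lemma card_squarefree_monic_polys:
  assumes "2 \<le> n"
  shows "card {b \<in> monic_polys n :: 'a::{finite,field} poly set. squarefree b} + CARD('a) ^ (n - 1)
           = CARD('a) ^ n"
proof -
  let ?q = "CARD('a)"
  let ?S = "\<lambda>m. card {b \<in> monic_polys m :: 'a poly set. squarefree b}"
  have n_div_2: "n div 2 = Suc ((n - 2) div 2)"
    using assms by (simp add: div_Suc le_div_geq)
  have "?q ^ n = (\<Sum>k\<le>n div 2. ?q ^ k * ?S (n - 2 * k))"
    by (rule card_monic_polys_square_decomposition)
  also have "\<dots> = ?S n + ?q * (\<Sum>k\<le>(n - 2) div 2. ?q ^ k * ?S (n - 2 - 2 * k))"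
    unfolding n_div_2 sum.atMost_Suc_shift by (simp add: sum_distrib_left mult.assoc)
  also have "(\<Sum>k\<le>(n - 2) div 2. ?q ^ k * ?S (n - 2 - 2 * k)) = ?q ^ (n - 2)"
    by (rule card_monic_polys_square_decomposition[symmetric])
  also have "?q * ?q ^ (n - 2) = ?q ^ (n - 1)"
    using assms by (simp flip: power_Suc add: Suc_diff_Suc numeral_2_eq_2)
  finally show ?thesis by simp
qed

lemma card_not_squarefree_monic_polys:
  assumes "2 \<le> n"
  shows "card {f \<in> monic_polys n :: 'a::{finite,field} poly set. \<not> squarefree f} = CARD('a) ^ (n - 1)"
proof -
  let ?M = "monic_polys n :: 'a poly set"
  have "?M = {f \<in> ?M. squarefree f} \<union> {f \<in> ?M. \<not> squarefree f}" by auto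
  then have "card ?M = card {f \<in> ?M. squarefree f} + card {f \<in> ?M. \<not> squarefree f}"
    by (metis (no_types, lifting) card_Un_disjoint disjoint_iff finite_Un finite_monic_polys mem_Collect_eq)
  with card_squarefree_monic_polys[OF assms, where 'a='a] show ?thesis
    by (simp add: card_monic_polys)
qed

lemma squarefree_smult_iff:
  fixes f :: "'a::field poly"
  assumes "c \<noteq> 0"
  shows "squarefree (smult c f) \<longleftrightarrow> squarefree f"
  using assms by (simp add: squarefree_def dvd_smult_iff)

lemma bij_betw_smult_monic_polys:
  fixes P :: "'a::field poly \<Rightarrow> bool"
  assumes "0 < n" and P: "\<And>c f. c \<noteq> 0 \<Longrightarrow> P (smult c f) \<longleftrightarrow> P f"
  shows "bij_betw (\<lambda>(c, g). smult c g) ((UNIV - {0}) \<times> {g \<in> monic_polys n. P g})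
           {f. degree f = n \<and> P f}"
    (is "bij_betw ?smult (_ \<times> ?T) _")
proof (rule bij_betw_imageI)
  show "inj_on ?smult ((UNIV - {0}) \<times> ?T)"
  proof (rule inj_onI)
    fix x y
    assume "x \<in> (UNIV - {0}) \<times> ?T" "y \<in> (UNIV - {0}) \<times> ?T" "?smult x = ?smult y"
    moreover obtain c g c' g' where xy: "x = (c, g)" "y = (c', g')"
      by (cases x, cases y) auto
    ultimately have "lead_coeff g = 1" "lead_coeff g' = 1" "c \<noteq> 0"
      and eq: "smult c g = smult c' g'"
      unfolding monic_polys_def by auto
    then have "c = c'"
      by (metis lead_coeff_smult mult.right_neutral)
    moreover from this eq \<open>c \<noteq> 0\<close> have "g = g'"
      by (metis diff_eq_diff_eq diff_self smult_diff_right smult_eq_0_iff)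
    ultimately show "x = y"
      using xy by simp
  qed
  show "?smult ` ((UNIV - {0}) \<times> ?T) = {f. degree f = n \<and> P f}"
  proof (intro equalityI subsetI)
    fix f
    assume "f \<in> ?smult ` ((UNIV - {0}) \<times> ?T)"
    then obtain c g where "c \<noteq> 0" "g \<in> ?T" "f = smult c g" by auto
    then show "f \<in> {f. degree f = n \<and> P f}"
      by (simp add: monic_polys_def P)
  next
    fix f
    assume f: "f \<in> {f. degree f = n \<and> P f}"
    with \<open>0 < n\<close> have "f \<noteq> 0" by auto
    define g where "g = smult (inverse (lead_coeff f)) f"
    have "lead_coeff f \<noteq> 0"
      using \<open>f \<noteq> 0\<close> by simp
    with f have "g \<in> ?T"
      by (simp add: g_def monic_polys_def P)
    moreover have "f = smult (lead_coeff f) g"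
      using \<open>f \<noteq> 0\<close> by (simp add: g_def)
    ultimately show "f \<in> ?smult ` ((UNIV - {0}) \<times> ?T)"
      using \<open>f \<noteq> 0\<close> by (intro image_eqI[of _ _ "(lead_coeff f, g)"]) simp_all
  qed
qed

lemma card_degree_eq_smult_invariant:
  fixes P :: "'a::{finite,field} poly \<Rightarrow> bool"
  assumes "0 < n" and "\<And>c f. c \<noteq> 0 \<Longrightarrow> P (smult c f) \<longleftrightarrow> P f"
  shows "card {f. degree f = n \<and> P f} = (CARD('a) - 1) * card {f \<in> monic_polys n. P f}"
proof -
  have "card {f. degree f = n \<and> P f} = card ((UNIV - {0 :: 'a}) \<times> {f \<in> monic_polys n. P f})"
    by (rule bij_betw_same_card[OF bij_betw_smult_monic_polys[OF assms], symmetric])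
  then show ?thesis
    by (simp add: card_cartesian_product card_Diff_subset)
qed

lemma card_not_squarefree_degree_eq:
  assumes "2 \<le> n"
  shows "card {f :: 'a::{finite,field} poly. degree f = n \<and> \<not> squarefree f}
           = (CARD('a) - 1) * CARD('a) ^ (n - 1)"
proof -
  have "card {f :: 'a poly. degree f = n \<and> \<not> squarefree f}
          = (CARD('a) - 1) * card {f \<in> monic_polys n :: 'a poly set. \<not> squarefree f}"
    using assms by (intro card_degree_eq_smult_invariant) (simp_all add: squarefree_smult_iff)
  with card_not_squarefree_monic_polys[OF assms, where 'a='a] show ?thesis by simp
qed

lemma B_eq_Un:
  "(B d :: 'a::{finite,field} poly set) =
     {f. degree f \<le> d - 2} \<union>
     {f. degree f = d - 1 \<and> \<not> squarefree f} \<union> {f. degree f = d \<and> \<not> squarefree f}"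
  unfolding B_def binary_forms_def
  by (auto intro: has_double_rootI dest: has_double_rootD)

lemma card_B:
  assumes "3 \<le> d"
  shows "card (B d :: 'a::{finite,field} poly set) =
           CARD('a) ^ (d - 1) + (CARD('a) - 1) * CARD('a) ^ (d - 2) +
           (CARD('a) - 1) * CARD('a) ^ (d - 1)"
proof -
  let ?L = "{f :: 'a poly. degree f \<le> d - 2}"
  let ?C = "{f :: 'a poly. degree f = d - 1 \<and> \<not> squarefree f}"
  let ?D = "{f :: 'a poly. degree f = d \<and> \<not> squarefree f}"
  have finite: "finite ?L" "finite ?C" "finite ?D"
    by (auto intro: finite_subset[OF _ finite_degree_le[of d]])
  have "card (?L \<union> ?C) = card ?L + card ?C"
    by (rule card_Un_disjoint) (use finite assms in auto)
  moreover have "card (?L \<union> ?C \<union> ?D) = card (?L \<union> ?C) + card ?D"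
    by (rule card_Un_disjoint) (use finite assms in auto)
  moreover have "card ?L = CARD('a) ^ (d - 1)"
    using assms card_degree_le[of "d - 2", where 'a='a] by (simp add: Suc_diff_Suc numeral_2_eq_2)
  moreover have "card ?C = (CARD('a) - 1) * CARD('a) ^ (d - 2)"
    using assms card_not_squarefree_degree_eq[of "d - 1", where 'a='a] by (simp add: numeral_2_eq_2)
  moreover have "card ?D = (CARD('a) - 1) * CARD('a) ^ (d - 1)"
    using assms card_not_squarefree_degree_eq[of d, where 'a='a] by simp
  ultimately show ?thesis
    by (simp add: B_eq_Un)
qed

theorem lemma4p1:
  assumes "d \<ge> 3"
  shows "card (B d :: 'a::{finite,field} poly set)
           = CARD('a) ^ d + CARD('a) ^ (d - 1) - CARD('a) ^ (d - 2)"
proof -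
  let ?q = "CARD('a)"
  obtain r where q: "?q = Suc r"
    using zero_less_card_finite[where 'a='a] gr0_implies_Suc by blast
  obtain e where d: "d = e + 2"
    using assms by (intro that[of "d - 2"]) simp
  have "?q ^ (d - 1) + (?q - 1) * ?q ^ (d - 2) + (?q - 1) * ?q ^ (d - 1) + ?q ^ (d - 2)
          = ?q ^ d + ?q ^ (d - 1)"
    by (simp add: q d algebra_simps)
  with card_B[OF assms, where 'a='a] show ?thesis
    by linarith
qed

end
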